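(* Let $p$ be a prime, $q=p^m$, and $f:\mathbb{F}_q\to\mathbb{F}_p$ a function with $f(0)=0$ and $f(ax)=f(x)$ for all $a\in\mathbb{F}_p^*$, $x\in\mathbb{F}_q$. Let $I=f(\mathbb{F}_q^* )$. Then the partition $P=\{D^*_{f,i}\}_{i\in I}$ of $\mathbb{F}_q^*$ induces an $|I|$-class association scheme $(\mathbb{F}_q,\{R_i\}_{i\in I})$ if and only if $|I|=|\{W_f(\beta):\beta\in\mathbb{F}_q^*\}|$.
   Context: $\mathrm{Tr}$ is the absolute trace $\mathbb{F}_q\to\mathbb{F}_p$, $\zeta_p=e^{2\pi\sqrt{-1}/p}$, $W_f(\beta)=\sum_{x\in\mathbb{F}_q}\zeta_p^{f(x)-\mathrm{Tr}(\beta x)}$. For $i\in\mathbb{F}_p$, $D_{f,i}=\{x\in\mathbb{F}_q:f(x)=i\}$, $D^*_{f,i}=D_{f,i}\setminus\{0\}$, $I=\{f(x):x\ne0\}$. Relations on $\mathbb{F}_q$: the diagonal $R_{-1}$ and, for $i\in I$, $(\alpha,\beta)\in R_i$ iff $\alpha-\beta\in D^*_{f,i}$. The partition induces an $|I|$-class association scheme if these relations form a symmetric association scheme on $\mathbb{F}_q$ (each relation symmetric, and for any three relations $R_a,R_b,R_c$ the number $|\{w:(u,w)\in R_a,(w,v)\in R_b\}|$ is constant over $(u,v)\in R_c$). *)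

theory Defs
  imports "HOL-Analysis.Analysis"
begin

definition prime_subfield :: "'a::field set" where
  "prime_subfield = {of_nat k | k. k < CHAR('a)}"

definition fp_rep :: "'a::field \<Rightarrow> nat" where
  "fp_rep c = (THE k. k < CHAR('a) \<and> of_nat k = c)"

definition abs_trace :: "nat \<Rightarrow> 'a::field \<Rightarrow> 'a" where
  "abs_trace m x = (\<Sum>i<m. x ^ (CHAR('a) ^ i))"

definition zeta :: "nat \<Rightarrow> complex" where
  "zeta p = cis (2 * pi / real p)"

definition walsh :: "nat \<Rightarrow> ('a::{finite,field} \<Rightarrow> 'a) \<Rightarrow> 'a \<Rightarrow> complex" where
  "walsh m f \<beta> = (\<Sum>x\<in>UNIV. zeta CHAR('a) ^ fp_rep (f x - abs_trace m (\<beta> * x)))"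

definition sym_assoc_scheme :: "'a set \<Rightarrow> 'i set \<Rightarrow> ('i \<Rightarrow> ('a \<times> 'a) set) \<Rightarrow> bool" where
  "sym_assoc_scheme X J R \<longleftrightarrow>
     finite X \<and>
     (\<forall>j\<in>J. R j \<noteq> {} \<and> R j \<subseteq> X \<times> X \<and> (\<forall>x y. (x, y) \<in> R j \<longrightarrow> (y, x) \<in> R j)) \<and>
     (\<forall>j\<in>J. \<forall>k\<in>J. j \<noteq> k \<longrightarrow> R j \<inter> R k = {}) \<and>
     (\<Union>j\<in>J. R j) = X \<times> X \<and>
     (\<exists>j0\<in>J. R j0 = Id_on X) \<and>
     (\<forall>a\<in>J. \<forall>b\<in>J. \<forall>c\<in>J. \<exists>n. \<forall>u v. (u, v) \<in> R c \<longrightarrow>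
          card {w \<in> X. (u, w) \<in> R a \<and> (w, v) \<in> R b} = n)"

text \<open>D^*_{f,i} and the relations: None is the diagonal R_{-1}, Some i is R_i.\<close>
definition Dstar :: "('a::field \<Rightarrow> 'a) \<Rightarrow> 'a \<Rightarrow> 'a set" where
  "Dstar f i = {x. f x = i \<and> x \<noteq> 0}"

definition rel_of :: "('a::field \<Rightarrow> 'a) \<Rightarrow> 'a option \<Rightarrow> ('a \<times> 'a) set" where
  "rel_of f j = (case j of None \<Rightarrow> Id
                 | Some i \<Rightarrow> {(\<alpha>, \<beta>). \<alpha> - \<beta> \<in> Dstar f i})"

end

(*
  Each relation R_j is translation invariant: (u, v) is in R_j iff u - v lies in the cell j of
  the partition {0}, D*_{f,i} of F_q. So the relations form a scheme iff the number of w with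
  t - w in cell a and w in cell b depends only on the cell of t. Under the additive Fourier
  transform this says that the span H of the character sums h_j(g) = sum of chi_g(x) over the
  cell j is closed under pointwise multiplication. The h_j are linearly independent and are
  functions of the profile g |-> (h_j(g))_j, so H lies in the algebra of functions of the
  profile, whose dimension is the number of profiles. Hence H is closed under multiplication iff
  the number of profiles equals the number |I| + 1 of cells (a product of affine functions
  from H separates any one profile class from the others).

  W_f(-g) = 1 + sum_k zeta_p^k h_{D_k}(g), and the values
  (p - 1) h_{D_k}(g) are integers because every cell is invariant under F_p^*. The only integer
  relations among 1, zeta_p, ..., zeta_p^(p-1) are multiples of their sum (Eisenstein's
  criterion for the shifted p-th cyclotomic polynomial), and for g <> 0 the values h_{D_k}(g) sum
  to -1. Hence for g, g' <> 0, W_f(-g) = W_f(-g') iff g and g' have the same profile, while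
  g = 0 has a profile of its own: there are |{W_f(b) : b <> 0}| + 1 profiles.
*)
theory Submission
  imports
    Defs
    "HOL-Computational_Algebra.Computational_Algebra"
    "HOL-Number_Theory.Cong"
    "HOL-Algebra.FiniteProduct"
    "HOL-Library.Function_Algebras"
    "HOL-Library.Real_Mod"
begin

section \<open>Integer polynomials and Eisenstein's criterion\<close>

lemma map_poly_of_int_add [simp]:
  "map_poly (of_int :: int \<Rightarrow> 'a::ring_1) (P + Q) = map_poly of_int P + map_poly of_int Q"
  by (intro poly_eqI) (simp add: coeff_map_poly)

lemma map_poly_of_int_mult [simp]:
  "map_poly (of_int :: int \<Rightarrow> 'a::comm_ring_1) (P * Q) = map_poly of_int P * map_poly of_int Q"
  by (intro poly_eqI) (simp add: coeff_map_poly coeff_mult)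

lemma poly_map_poly_of_int_shift:
  "poly (map_poly (of_int :: int \<Rightarrow> 'a::comm_ring_1) (P \<circ>\<^sub>p [:1, 1:])) x
     = poly (map_poly of_int P) (x + 1)"
  by (induction P) (simp_all add: pcompose_pCons map_poly_pCons algebra_simps)

lemma poly_map_poly_of_int_eq_sum:
  fixes x :: "'a::comm_ring_1"
  assumes "degree P < N"
  shows "poly (map_poly of_int P) x = (\<Sum>i<N. of_int (coeff P i) * x ^ i)"
proof -
  have "degree (map_poly (of_int :: int \<Rightarrow> 'a) P) < N"
  proof -
    have "degree (map_poly (of_int :: int \<Rightarrow> 'a) P) \<le> degree P"
      by (rule degree_le) (auto simp: coeff_map_poly coeff_eq_0)
    then show ?thesis using assms by simp
  qed
  then show ?thesis
    unfolding poly_altdef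
    by (intro sum.mono_neutral_cong_left)
      (auto simp: coeff_map_poly coeff_eq_0 dest!: mult_not_zero intro!: le_degree)
qed

lemma prime_not_dvd_coeff_mult:
  fixes p :: int
  assumes "prime p"
    and "\<not> p dvd coeff G i" "\<And>i'. i' < i \<Longrightarrow> p dvd coeff G i'"
    and "\<not> p dvd coeff H j" "\<And>j'. j' < j \<Longrightarrow> p dvd coeff H j'"
  shows "\<not> p dvd coeff (G * H) (i + j)"
proof -
  have "coeff (G * H) (i + j)
      = coeff G i * coeff H j + (\<Sum>k\<in>{..i + j} - {i}. coeff G k * coeff H (i + j - k))"
    unfolding coeff_mult by (subst sum.remove[of _ i]) auto
  moreover have "p dvd (\<Sum>k\<in>{..i + j} - {i}. coeff G k * coeff H (i + j - k))"
  proof (rule dvd_sum)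
    fix k assume "k \<in> {..i + j} - {i}"
    then have "k < i \<or> i + j - k < j" by auto
    then show "p dvd coeff G k * coeff H (i + j - k)"
      using assms(3,5) by (meson dvd_mult dvd_mult2)
  qed
  moreover have "\<not> p dvd coeff G i * coeff H j"
    using assms(1,2,4) by (simp add: prime_dvd_mult_iff)
  ultimately show ?thesis by (simp add: dvd_add_left_iff)
qed

theorem eisenstein_criterion:
  fixes p :: int and F G H :: "int poly"
  assumes p: "prime p" and F: "F = G * H"
    and lead: "\<not> p dvd lead_coeff F"
    and coeffs: "\<And>i. i < degree F \<Longrightarrow> p dvd coeff F i"
    and const: "\<not> p\<^sup>2 dvd coeff F 0"
  shows "degree G = 0 \<or> degree H = 0"
proof (rule ccontr)
  assume "\<not> (degree G = 0 \<or> degree H = 0)"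
  then have "G \<noteq> 0" "H \<noteq> 0" "degree G > 0" "degree H > 0" by auto
  then have deg: "degree F = degree G + degree H"
    using F by (simp add: degree_mult_eq)
  have "\<not> p dvd lead_coeff G" "\<not> p dvd lead_coeff H"
    using lead F by (auto simp: lead_coeff_mult)
  define i where "i = (LEAST i. \<not> p dvd coeff G i)"
  define j where "j = (LEAST j. \<not> p dvd coeff H j)"
  have i: "\<not> p dvd coeff G i" "i \<le> degree G" "\<And>i'. i' < i \<Longrightarrow> p dvd coeff G i'"
    using \<open>\<not> p dvd lead_coeff G\<close> LeastI[of "\<lambda>k. \<not> p dvd coeff G k" "degree G"]
    unfolding i_def by (auto intro: Least_le dest: not_less_Least)
  have j: "\<not> p dvd coeff H j" "j \<le> degree H" "\<And>j'. j' < j \<Longrightarrow> p dvd coeff H j'"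
    using \<open>\<not> p dvd lead_coeff H\<close> LeastI[of "\<lambda>k. \<not> p dvd coeff H k" "degree H"]
    unfolding j_def by (auto intro: Least_le dest: not_less_Least)
  have "\<not> p dvd coeff F (i + j)"
    using prime_not_dvd_coeff_mult[OF p i(1,3) j(1,3)] F by simp
  then have "degree F \<le> i + j"
    using coeffs by (meson not_le)
  then have "i = degree G" "j = degree H"
    using deg i(2) j(2) by linarith+
  then have "p dvd coeff G 0" "p dvd coeff H 0"
    using i(3) j(3) \<open>degree G > 0\<close> \<open>degree H > 0\<close> by auto
  then have "p\<^sup>2 dvd coeff F 0"
    using F by (simp add: power2_eq_square coeff_mult_0 mult_dvd_mono)
  with const show False ..
qed

lemma smult_eq_mult_primitive_imp_factor:
  fixes F G Q :: "int poly"
  assumes "content F = 1" and "content G = 1" and "a \<noteq> 0" and eq: "smult a F = G * Q"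
  shows "F = G * smult (sgn a) (primitive_part Q)"
proof -
  define Q1 where "Q1 = smult (sgn a) (primitive_part Q)"
  have "content Q = content (G * Q)"
    using assms(2) by (simp add: content_mult)
  also have "\<dots> = \<bar>a\<bar>"
    using assms(1) by (simp flip: eq)
  finally have "Q = smult a Q1"
    using content_times_primitive_part[of Q] by (simp add: Q1_def abs_sgn mult.commute)
  with eq have "smult a F = smult a (G * Q1)"
    by simp
  with assms(3) have "F = G * Q1"
    by (rule smult_cancel)
  then show ?thesis
    by (simp add: Q1_def)
qed

lemma degree_le_of_common_root:
  fixes F G :: "int poly" and w :: "'a::{idom,ring_char_0}"
  assumes content: "content F = 1"
    and factors: "\<And>A B. F = A * B \<Longrightarrow> degree A = 0 \<or> degree B = 0"
    and F_root: "poly (map_poly of_int F) w = 0"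
    and "G \<noteq> 0" and "poly (map_poly of_int G) w = 0"
  shows "degree F \<le> degree G"
proof -
  let ?root = "\<lambda>G. G \<noteq> 0 \<and> poly (map_poly (of_int :: int \<Rightarrow> 'a) G) w = 0"
  obtain G1 where G1: "?root G1" and min: "\<And>G'. ?root G' \<Longrightarrow> degree G1 \<le> degree G'"
    using ex_has_least_nat[of ?root G degree] assms(4,5) by blast
  define G0 where "G0 = primitive_part G1"
  have G0: "G0 \<noteq> 0" "degree G0 = degree G1" "content G0 = 1"
    using G1 by (auto simp: G0_def)
  have "map_poly (of_int :: int \<Rightarrow> 'a) G1 = map_poly of_int (smult (content G1) G0)"
    by (simp add: G0_def)
  then have "poly (map_poly of_int G1) w = of_int (content G1) * poly (map_poly of_int G0) w"
    by (simp add: map_poly_smult)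
  then have G0_root: "poly (map_poly (of_int :: int \<Rightarrow> 'a) G0) w = 0"
    using G1 by simp
  obtain a Q where aQ: "a \<noteq> 0" "smult a F = G0 * Q + pseudo_mod F G0"
    using pseudo_mod(1)[OF G0(1)] by blast
  have "pseudo_mod F G0 = 0"
  proof (rule ccontr)
    assume R: "pseudo_mod F G0 \<noteq> 0"
    have "poly (map_poly of_int (smult a F)) w = poly (map_poly of_int (G0 * Q + pseudo_mod F G0)) w"
      using aQ by simp
    then have "?root (pseudo_mod F G0)"
      using R F_root G0_root by (simp add: map_poly_smult)
    with min have "degree G1 \<le> degree (pseudo_mod F G0)" .
    moreover have "degree (pseudo_mod F G0) < degree G0"
      using pseudo_mod(2)[OF G0(1)] R by auto
    ultimately show False using G0(2) by simp
  qed
  with aQ have F_eq: "F = G0 * smult (sgn a) (primitive_part Q)"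
    using smult_eq_mult_primitive_imp_factor[OF content G0(3)] by simp
  from factors[OF this] show ?thesis
  proof
    assume "degree G0 = 0"
    then obtain c where "G0 = [:c:]" by (metis degree_eq_zeroE)
    then show ?thesis using G0(1) G0_root by (simp add: map_poly_pCons)
  next
    assume "degree (smult (sgn a) (primitive_part Q)) = 0"
    moreover have "F \<noteq> 0" using content by auto
    ultimately have "degree F = degree G1"
      using F_eq G0(2) by (simp add: degree_mult_eq)
    also have "\<dots> \<le> degree G" using min assms(4,5) by blast
    finally show ?thesis .
  qed
qed

section \<open>Integer relations among the powers of \<open>zeta p\<close>\<close>

definition cyclotomic_shift :: "nat \<Rightarrow> int poly" where
  "cyclotomic_shift p = (\<Sum>j<p. monom (int (p choose Suc j)) j)"

lemma coeff_cyclotomic_shift: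
  "coeff (cyclotomic_shift p) i = (if i < p then int (p choose Suc i) else 0)"
  by (simp add: cyclotomic_shift_def coeff_sum)

lemma degree_cyclotomic_shift: "degree (cyclotomic_shift p) = p - 1"
proof (cases "p = 0")
  case False
  then show ?thesis
    by (intro antisym degree_le le_degree) (auto simp: coeff_cyclotomic_shift)
qed (simp add: cyclotomic_shift_def)

lemma lead_coeff_cyclotomic_shift: "p > 0 \<Longrightarrow> lead_coeff (cyclotomic_shift p) = 1"
  by (simp add: degree_cyclotomic_shift coeff_cyclotomic_shift)

lemma content_cyclotomic_shift: "p > 0 \<Longrightarrow> content (cyclotomic_shift p) = 1"
  by (metis content_dvd_coeff is_unit_content_iff lead_coeff_cyclotomic_shift)

lemma poly_cyclotomic_shift:
  fixes w :: "'a::idom"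
  assumes "p > 0" and "(w + 1) ^ p = 1" and "w \<noteq> 0"
  shows "poly (map_poly of_int (cyclotomic_shift p)) w = 0"
proof -
  obtain n where n: "p = Suc n" using assms(1) by (cases p) auto
  have "w * poly (map_poly of_int (cyclotomic_shift p)) w
      = (\<Sum>k\<le>n. of_nat (p choose Suc k) * w ^ Suc k)"
    by (simp add: poly_map_poly_of_int_eq_sum[of _ p] degree_cyclotomic_shift n
        coeff_cyclotomic_shift sum_distrib_left lessThan_Suc_atMost mult_ac
        del: binomial_Suc_Suc)
  also have "\<dots> = (w + 1) ^ p - 1"
    unfolding binomial_ring n by (subst sum.atMost_Suc_shift) simp
  finally show ?thesis using assms(2,3) by simp
qed

lemma cyclotomic_shift_irreducible:
  assumes "prime p" and "cyclotomic_shift p = G * H"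
  shows "degree G = 0 \<or> degree H = 0"
proof (rule eisenstein_criterion[OF _ assms(2)])
  have p: "p > 0" using assms(1) prime_gt_0_nat by blast
  show "prime (int p)" using assms(1) by simp
  show "\<not> int p dvd lead_coeff (cyclotomic_shift p)"
    using prime_gt_1_nat[OF assms(1)] p by (simp add: lead_coeff_cyclotomic_shift prime_int_iff)
  show "int p dvd coeff (cyclotomic_shift p) i" if "i < degree (cyclotomic_shift p)" for i
    using that assms(1) by (simp add: coeff_cyclotomic_shift degree_cyclotomic_shift dvd_choose_prime)
  show "\<not> (int p)\<^sup>2 dvd coeff (cyclotomic_shift p) 0"
    using prime_gt_1_nat[OF assms(1)] p by (simp add: coeff_cyclotomic_shift power2_eq_square prime_int_iff)
qed

lemma zeta_power_eq_1_iff: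
  assumes "p > 0"
  shows "zeta p ^ k = 1 \<longleftrightarrow> p dvd k"
proof -
  have rescale: "real k * (2 * pi / real p) = of_int n * (2 * pi) \<longleftrightarrow> real k = of_int n * real p"
    for n :: int
    using assms by (auto simp: divide_simps mult.commute mult.left_commute)
  have "zeta p ^ k = 1 \<longleftrightarrow> (\<exists>n::int. real k * (2 * pi / real p) = of_int n * (2 * pi))"
    unfolding zeta_def Complex.DeMoivre cis_eq_1_iff ..
  also have "\<dots> \<longleftrightarrow> (\<exists>n::int. int k = n * int p)"
    unfolding rescale by (metis of_int_eq_iff of_int_mult of_int_of_nat_eq)
  also have "\<dots> \<longleftrightarrow> int p dvd int k"
    by (auto simp: dvd_def mult.commute)
  also have "\<dots> \<longleftrightarrow> p dvd k"
    by (rule int_dvd_int_iff)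
  finally show ?thesis .
qed

lemma zeta_power_mod:
  assumes "p > 0"
  shows "zeta p ^ k = zeta p ^ (k mod p)"
proof -
  have "zeta p ^ k = zeta p ^ (p * (k div p) + k mod p)"
    by simp
  also have "\<dots> = (zeta p ^ p) ^ (k div p) * zeta p ^ (k mod p)"
    by (simp only: power_add power_mult)
  finally show ?thesis
    using zeta_power_eq_1_iff[OF assms, of p] by simp
qed

lemma sum_zeta_powers:
  assumes "p > 0"
  shows "(\<Sum>a<p. zeta p ^ (a * r)) = (if p dvd r then of_nat p else 0)"
proof (cases "p dvd r")
  case True
  then have "zeta p ^ (a * r) = 1" for a
    using assms by (simp add: zeta_power_eq_1_iff)
  then show ?thesis
    using True by simp
next
  case False
  have "zeta p ^ r \<noteq> 1" "(zeta p ^ r) ^ p = 1"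
    using False assms by (simp_all add: zeta_power_eq_1_iff flip: power_mult)
  then have "(\<Sum>a<p. (zeta p ^ r) ^ a) = 0"
    using power_diff_1_eq[of "zeta p ^ r" p] by simp
  moreover have "zeta p ^ (a * r) = (zeta p ^ r) ^ a" for a
    by (metis mult.commute power_mult)
  ultimately show ?thesis
    using False by simp
qed

lemma degree_ge_of_zeta_root:
  assumes p: "prime p" and "C \<noteq> 0" and root: "poly (map_poly of_int C) (zeta p) = 0"
  shows "p - 1 \<le> degree C"
proof -
  have p1: "p > 1" using p prime_gt_1_nat by blast
  have "zeta p - 1 \<noteq> 0" "(zeta p - 1 + 1) ^ p = 1"
    using p1 zeta_power_eq_1_iff[of p 1] zeta_power_eq_1_iff[of p p] by auto
  then have "degree (cyclotomic_shift p) \<le> degree (C \<circ>\<^sub>p [:1, 1:])"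
    using \<open>C \<noteq> 0\<close> root p1
    by (intro degree_le_of_common_root[where w = "zeta p - 1"])
       (auto simp: content_cyclotomic_shift cyclotomic_shift_irreducible[OF p]
         poly_cyclotomic_shift poly_map_poly_of_int_shift pcompose_eq_0_iff)
  then show ?thesis
    by (simp add: degree_cyclotomic_shift degree_pcompose)
qed

theorem zeta_integer_relation:
  fixes c :: "nat \<Rightarrow> int"
  assumes p: "prime p" and rel: "(\<Sum>k<p. of_int (c k) * zeta p ^ k) = 0" and "k < p"
  shows "c k = c (p - 1)"
proof -
  have p1: "p > 1" using p prime_gt_1_nat by blast
  \<comment> \<open>subtract \<open>c (p - 1)\<close> times \<open>\<Sum>k<p. zeta p ^ k = 0\<close>: a relation of degree \<open>< p - 1\<close>\<close>
  define C where "C = (\<Sum>k<p - 1. monom (c k - c (p - 1)) k)"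
  have coeff_C: "coeff C k = (if k < p - 1 then c k - c (p - 1) else 0)" for k
    by (simp add: C_def coeff_sum)
  have deg_C: "degree C < p - 1"
    by (rule degree_lessI) (use p1 in \<open>auto simp: coeff_C\<close>)
  have "poly (map_poly of_int C) (zeta p) = (\<Sum>k<p. of_int (coeff C k) * zeta p ^ k)"
    by (rule poly_map_poly_of_int_eq_sum) (use deg_C in simp)
  also have "\<dots> = (\<Sum>k<p. of_int (c k - c (p - 1)) * zeta p ^ k)"
  proof (rule sum.cong[OF refl])
    fix k assume "k \<in> {..<p}"
    then have "k < p - 1 \<or> k = p - 1" by auto
    then show "of_int (coeff C k) * zeta p ^ k = of_int (c k - c (p - 1)) * zeta p ^ k"
      by (auto simp: coeff_C)
  qed
  also have "\<dots> = (\<Sum>k<p. of_int (c k) * zeta p ^ k) - of_int (c (p - 1)) * (\<Sum>k<p. zeta p ^ k)"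
    by (simp add: left_diff_distrib sum_subtractf sum_distrib_left)
  also have "\<dots> = 0"
    using rel sum_zeta_powers[of p 1] p1 by simp
  finally have "C = 0"
    using degree_ge_of_zeta_root[OF p] deg_C by fastforce
  moreover have "k < p - 1 \<or> k = p - 1"
    using \<open>k < p\<close> by auto
  ultimately show ?thesis
    using coeff_C[of k] by auto
qed

lemma zeta_integer_relation_zero_sum:
  fixes c :: "nat \<Rightarrow> int"
  assumes p: "prime p" and rel: "(\<Sum>k<p. of_int (c k) * zeta p ^ k) = 0"
    and sum: "(\<Sum>k<p. c k) = 0" and "k < p"
  shows "c k = 0"
proof -
  have const: "c k' = c (p - 1)" if "k' < p" for k'
    using zeta_integer_relation[OF p rel that] .
  have "(\<Sum>k<p. c k) = (\<Sum>k<p. c (p - 1))"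
  proof (rule sum.cong[OF refl])
    fix k' assume "k' \<in> {..<p}"
    then show "c k' = c (p - 1)" by (intro const) simp
  qed
  then have "int p * c (p - 1) = 0"
    using sum by simp
  moreover have "p > 0"
    using p prime_gt_0_nat by blast
  ultimately have "c (p - 1) = 0"
    by simp
  with const[OF \<open>k < p\<close>] show ?thesis by simp
qed

section \<open>Spans of complex-valued functions closed under multiplication\<close>

definition fscale :: "complex \<Rightarrow> ('b \<Rightarrow> complex) \<Rightarrow> 'b \<Rightarrow> complex" where
  "fscale c u = (\<lambda>x. c * u x)"

lemma fscale_apply [simp]: "fscale c u x = c * u x"
  by (simp add: fscale_def)

interpretation cfun: vector_space "fscale :: complex \<Rightarrow> ('b \<Rightarrow> complex) \<Rightarrow> 'b \<Rightarrow> complex"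
  by unfold_locales (auto simp: fun_eq_iff algebra_simps)

lemma sum_fun_apply: "(\<Sum>a\<in>A. F a) x = (\<Sum>a\<in>A. F a x)"
  for F :: "'c \<Rightarrow> 'b \<Rightarrow> 'd::comm_monoid_add"
  by (induction A rule: infinite_finite_induct) auto

lemma prod_fun_apply: "(\<Prod>a\<in>A. F a) x = (\<Prod>a\<in>A. F a x)"
  for F :: "'c \<Rightarrow> 'b \<Rightarrow> 'd::comm_monoid_mult"
  by (induction A rule: infinite_finite_induct) auto

lemma subspace_mult_in_span: "cfun.subspace {u. u * w \<in> cfun.span S}"
  for w :: "'b \<Rightarrow> complex"
proof (rule cfun.subspaceI)
  show "0 \<in> {u. u * w \<in> cfun.span S}"
    using cfun.span_zero by (simp add: zero_fun_def times_fun_def)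
  show "u + v \<in> {u. u * w \<in> cfun.span S}"
    if "u \<in> {u. u * w \<in> cfun.span S}" "v \<in> {u. u * w \<in> cfun.span S}" for u v
    using that by (simp add: distrib_right cfun.span_add)
  show "fscale c u \<in> {u. u * w \<in> cfun.span S}" if "u \<in> {u. u * w \<in> cfun.span S}" for c u
  proof -
    have "fscale c u * w = fscale c (u * w)" by (simp add: fun_eq_iff)
    then show ?thesis using that by (simp add: cfun.span_scale)
  qed
qed

lemma span_mult_closed:
  fixes S :: "('b \<Rightarrow> complex) set"
  assumes mult: "\<And>u v. u \<in> S \<Longrightarrow> v \<in> S \<Longrightarrow> u * v \<in> cfun.span S"
    and "u \<in> cfun.span S" "v \<in> cfun.span S"
  shows "u * v \<in> cfun.span S"
proof -
  have "u * w \<in> cfun.span S" if "w \<in> S" for w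
  proof -
    have "S \<subseteq> {u. u * w \<in> cfun.span S}"
      using mult that by blast
    then have "cfun.span S \<subseteq> {u. u * w \<in> cfun.span S}"
      by (rule cfun.span_minimal[OF _ subspace_mult_in_span])
    then show ?thesis using \<open>u \<in> cfun.span S\<close> by blast
  qed
  then have "S \<subseteq> {w. w * u \<in> cfun.span S}"
    by (auto simp: mult.commute)
  then have "cfun.span S \<subseteq> {w. w * u \<in> cfun.span S}"
    by (rule cfun.span_minimal[OF _ subspace_mult_in_span])
  then show ?thesis
    using \<open>v \<in> cfun.span S\<close> by (auto simp: mult.commute)
qed

lemma span_prod_closed:
  fixes S :: "('b \<Rightarrow> complex) set"
  assumes "1 \<in> cfun.span S" and "\<And>u v. u \<in> S \<Longrightarrow> v \<in> S \<Longrightarrow> u * v \<in> cfun.span S"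
    and "\<And>a. a \<in> A \<Longrightarrow> F a \<in> cfun.span S"
  shows "(\<Prod>a\<in>A. F a) \<in> cfun.span S"
  using assms(3)
  by (induction A rule: infinite_finite_induct) (auto simp: assms(1) span_mult_closed[OF assms(2)])

lemma (in vector_space) span_subset_if_card_le:
  assumes "finite T" and indep: "independent S" and "S \<subseteq> span T" and "card T \<le> card S"
  shows "span T \<subseteq> span S"
proof
  fix a assume a: "a \<in> span T"
  show "a \<in> span S"
  proof (rule ccontr)
    assume "a \<notin> span S"
    then have "independent (insert a S)" "a \<notin> S"
      using independent_insertI[OF _ indep] span_base by auto
    moreover have "insert a S \<subseteq> span T"
      using a assms(3) by auto
    ultimately have "card S + 1 \<le> card T"
      using independent_span_bound[OF assms(1)] by fastforce
    with assms(4) show False by simp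
  qed
qed

definition profile :: "('b \<Rightarrow> complex) set \<Rightarrow> 'b \<Rightarrow> ('b \<Rightarrow> complex) \<Rightarrow> complex" where
  "profile S x = (\<lambda>u\<in>S. u x)"

definition profile_indicator ::
    "('b \<Rightarrow> complex) set \<Rightarrow> (('b \<Rightarrow> complex) \<Rightarrow> complex) \<Rightarrow> 'b \<Rightarrow> complex" where
  "profile_indicator S v = (\<lambda>y. if profile S y = v then 1 else 0)"

lemma profile_eq_iff: "profile S x = profile S y \<longleftrightarrow> (\<forall>u\<in>S. u x = u y)"
  by (auto simp: profile_def fun_eq_iff restrict_def)

lemma profile_indicator_in_span:
  fixes S :: "('b::finite \<Rightarrow> complex) set"
  assumes one: "1 \<in> cfun.span S"
    and mult: "\<And>u v. u \<in> S \<Longrightarrow> v \<in> S \<Longrightarrow> u * v \<in> cfun.span S"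
  shows "profile_indicator S (profile S x) \<in> cfun.span S"
proof -
  define B where "B = {y. profile S y \<noteq> profile S x}"
  have "\<exists>u\<in>S. u y \<noteq> u x" if "y \<in> B" for y
    using that by (auto simp: B_def profile_eq_iff)
  then obtain sep where sep: "\<And>y. y \<in> B \<Longrightarrow> sep y \<in> S \<and> sep y y \<noteq> sep y x"
    by metis
  \<comment> \<open>Lagrange-type product: the factor for \<open>y\<close> is 1 on the class of \<open>x\<close> and 0 at \<open>y\<close>\<close>
  define factor where
    "factor y = fscale (1 / (sep y x - sep y y)) (sep y - fscale (sep y y) 1)" for y
  have "(\<Prod>y\<in>B. factor y) \<in> cfun.span S"
  proof (rule span_prod_closed[OF one mult])
    fix y assume "y \<in> B"
    then have "sep y \<in> cfun.span S" using sep cfun.span_base by blast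
    then show "factor y \<in> cfun.span S"
      unfolding factor_def by (intro cfun.span_scale cfun.span_diff one)
  qed
  moreover have "(\<Prod>y\<in>B. factor y) = profile_indicator S (profile S x)"
  proof
    fix z
    show "(\<Prod>y\<in>B. factor y) z = profile_indicator S (profile S x) z"
    proof (cases "z \<in> B")
      case True
      have "factor z z = 0" by (simp add: factor_def)
      then have "(\<Prod>y\<in>B. factor y z) = 0"
        using True by (intro prod_zero) auto
      then show ?thesis
        using True by (simp add: prod_fun_apply profile_indicator_def B_def)
    next
      case False
      have "factor y z = 1" if "y \<in> B" for y
      proof -
        have "sep y z = sep y x"
          using False sep[OF that] by (auto simp: B_def profile_eq_iff)
        moreover have "sep y x \<noteq> sep y y" using sep[OF that] by auto
        ultimately show ?thesis by (simp add: factor_def)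
      qed
      then show ?thesis
        using False by (simp add: prod_fun_apply profile_indicator_def B_def)
    qed
  qed
  ultimately show ?thesis by simp
qed

lemma in_span_profile_indicators:
  fixes S :: "('b::finite \<Rightarrow> complex) set"
  assumes "\<And>y. F y = \<Phi> (profile S y)"
  shows "F \<in> cfun.span (profile_indicator S ` range (profile S))"
proof -
  have "F = (\<Sum>v\<in>range (profile S). fscale (\<Phi> v) (profile_indicator S v))"
  proof
    fix y
    have "(\<Sum>v\<in>range (profile S). fscale (\<Phi> v) (profile_indicator S v)) y
        = (\<Sum>v\<in>range (profile S). if v = profile S y then \<Phi> v else 0)"
      unfolding sum_fun_apply by (rule sum.cong) (auto simp: profile_indicator_def)
    then show "F y = (\<Sum>v\<in>range (profile S). fscale (\<Phi> v) (profile_indicator S v)) y"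
      by (simp add: assms)
  qed
  also have "\<dots> \<in> cfun.span (profile_indicator S ` range (profile S))"
    by (intro cfun.span_sum cfun.span_scale cfun.span_base) auto
  finally show ?thesis .
qed

lemma inj_on_profile_indicator: "inj_on (profile_indicator S) (range (profile S))"
  by (rule inj_onI) (auto simp: profile_indicator_def fun_eq_iff split: if_splits)

lemma independent_profile_indicators:
  "\<not> cfun.dependent (profile_indicator S ` range (profile (S :: ('b::finite \<Rightarrow> complex) set)))"
proof (rule cfun.independent_if_scalars_zero)
  show "finite (profile_indicator S ` range (profile S))" by simp
next
  fix c t
  assume sum0: "(\<Sum>w\<in>profile_indicator S ` range (profile S). fscale (c w) w) = 0"
    and t: "t \<in> profile_indicator S ` range (profile S)"
  then obtain x where x: "t = profile_indicator S (profile S x)" by auto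
  have "0 = (\<Sum>w\<in>profile_indicator S ` range (profile S). c w * w x)"
    using fun_cong[OF sum0, of x] by (simp add: sum_fun_apply)
  also have "\<dots> = (\<Sum>v\<in>range (profile S). c (profile_indicator S v) * profile_indicator S v x)"
    by (rule sum.reindex[OF inj_on_profile_indicator, unfolded comp_def])
  also have "\<dots> = (\<Sum>v\<in>range (profile S). if v = profile S x then c t else 0)"
    by (rule sum.cong) (auto simp: profile_indicator_def x)
  also have "\<dots> = c t" by simp
  finally show "c t = 0" by simp
qed

theorem span_mult_closed_iff_card_profiles:
  fixes S :: "('b::finite \<Rightarrow> complex) set"
  assumes "finite S" and indep: "\<not> cfun.dependent S" and one: "1 \<in> cfun.span S"
  shows "(\<forall>u\<in>S. \<forall>v\<in>S. u * v \<in> cfun.span S) \<longleftrightarrow> card (range (profile S)) = card S"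
proof -
  define T where "T = profile_indicator S ` range (profile S)"
  have T: "finite T" "\<not> cfun.dependent T" "card T = card (range (profile S))"
    using independent_profile_indicators[of S]
    by (auto simp: T_def card_image[OF inj_on_profile_indicator])
  have "u \<in> cfun.span T" if "u \<in> S" for u
    unfolding T_def by (rule in_span_profile_indicators[of _ "\<lambda>v. v u"]) (simp add: profile_def that)
  then have S_T: "S \<subseteq> cfun.span T" by blast
  then have "card S \<le> card T"
    using cfun.independent_span_bound[OF T(1) indep] by simp
  show ?thesis
  proof
    assume "\<forall>u\<in>S. \<forall>v\<in>S. u * v \<in> cfun.span S"
    then have "T \<subseteq> cfun.span S"
      using profile_indicator_in_span[OF one] by (auto simp: T_def)
    then have "card T \<le> card S"
      using cfun.independent_span_bound[OF \<open>finite S\<close> T(2)] by simp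
    with \<open>card S \<le> card T\<close> T(3) show "card (range (profile S)) = card S" by simp
  next
    assume card_eq: "card (range (profile S)) = card S"
    have span_T: "cfun.span T \<subseteq> cfun.span S"
      using cfun.span_subset_if_card_le[OF T(1) indep S_T] card_eq T(3) by simp
    have "u * v \<in> cfun.span T" if "u \<in> S" "v \<in> S" for u v
      unfolding T_def
      by (rule in_span_profile_indicators[of _ "\<lambda>w. w u * w v"]) (simp add: profile_def that)
    with span_T show "\<forall>u\<in>S. \<forall>v\<in>S. u * v \<in> cfun.span S" by blast
  qed
qed

section \<open>Finite fields of characteristic \<open>p\<close> and the absolute trace\<close>

lemma field_power_card_eq_self:
  fixes x :: "'a::{finite,field}"
  shows "x ^ CARD('a) = x"
proof (cases "x = 0")
  case False
  define G :: "'a monoid" where "G = \<lparr>carrier = UNIV - {0}, monoid.mult = (*), one = 1\<rparr>"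
  interpret comm_group G
  proof (rule comm_groupI)
    fix y assume "y \<in> carrier G"
    then show "\<exists>z\<in>carrier G. z \<otimes>\<^bsub>G\<^esub> y = \<one>\<^bsub>G\<^esub>"
      by (intro bexI[of _ "inverse y"]) (auto simp: G_def)
  qed (auto simp: G_def ac_simps)
  have pow: "y [^]\<^bsub>G\<^esub> (n::nat) = y ^ n" for y n
    by (induction n) (simp_all add: G_def)
  have "x ^ (CARD('a) - 1) = 1"
    using power_order_eq_one[of x] False unfolding pow by (simp add: G_def card_Diff_singleton)
  moreover have "CARD('a) = Suc (CARD('a) - 1)"
    using finite_UNIV_card_ge_0[where ?'a = 'a] by simp
  then have "x ^ CARD('a) = x * x ^ (CARD('a) - 1)"
    by (metis power_Suc)
  ultimately show ?thesis
    by simp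
qed simp

locale prime_power_field =
  fixes p m :: nat
  assumes prime_p: "prime p" and char: "CHAR('a::{finite,field}) = p" and card: "CARD('a) = p ^ m"
begin

lemma p_gt_1: "p > 1"
  using prime_p prime_gt_1_nat by blast

lemma p_pos: "p > 0"
  using p_gt_1 by simp

lemma m_pos: "m > 0"
proof (rule ccontr)
  assume "\<not> m > 0"
  then have "CARD('a) = 1"
    using card by simp
  moreover have "card {0::'a, 1} \<le> CARD('a)"
    by (intro card_mono) auto
  ultimately show False
    by simp
qed

lemma of_nat_eq_iff_mod_p: "(of_nat k :: 'a) = of_nat k' \<longleftrightarrow> k mod p = k' mod p"
  by (simp add: of_nat_eq_iff_cong_CHAR char cong_def)

lemma of_nat_mod_p: "(of_nat (k mod p) :: 'a) = of_nat k"
  by (simp add: of_nat_eq_iff_mod_p)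

lemma prime_subfield_iff: "(c :: 'a) \<in> prime_subfield \<longleftrightarrow> (\<exists>k. of_nat k = c)"
proof
  assume "\<exists>k. of_nat k = c"
  then obtain k where "of_nat (k mod p) = c" "k mod p < p"
    using of_nat_mod_p p_pos by auto
  then show "c \<in> prime_subfield"
    unfolding prime_subfield_def char by blast
qed (auto simp: prime_subfield_def)

lemma fp_rep_of_nat: "fp_rep (of_nat k :: 'a) = k mod p"
  unfolding fp_rep_def char
proof (rule the_equality)
  show "\<And>k'. k' < p \<and> of_nat k' = (of_nat k :: 'a) \<Longrightarrow> k' = k mod p"
    by (auto simp: of_nat_eq_iff_mod_p)
qed (simp_all add: p_pos of_nat_mod_p)

lemma fp_rep_less: "(c :: 'a) \<in> prime_subfield \<Longrightarrow> fp_rep c < p"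
  by (auto simp: prime_subfield_iff fp_rep_of_nat p_pos)

lemma of_nat_fp_rep: "(c :: 'a) \<in> prime_subfield \<Longrightarrow> of_nat (fp_rep c) = c"
  by (auto simp: prime_subfield_iff fp_rep_of_nat of_nat_mod_p)

lemma card_prime_subfield: "card (prime_subfield :: 'a set) = p"
proof -
  have "prime_subfield = (of_nat ` {..<p} :: 'a set)"
    unfolding prime_subfield_def char by auto
  moreover have "inj_on (of_nat :: nat \<Rightarrow> 'a) {..<p}"
    by (auto simp: inj_on_def of_nat_eq_iff_mod_p)
  then have "card (of_nat ` {..<p} :: 'a set) = p"
    by (simp add: card_image)
  ultimately show ?thesis by simp
qed

lemma prime_CHAR: "prime CHAR('a)"
  using prime_p char by simp

lemma of_nat_power_p: "(of_nat k :: 'a) ^ p = of_nat k"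
proof (induction k)
  case (Suc k)
  have "(of_nat k + 1 :: 'a) ^ p = of_nat k ^ p + 1 ^ p"
    by (rule freshmans_dream[OF prime_CHAR char[symmetric]])
  then show ?case
    using Suc by (simp add: add.commute)
qed (simp add: p_pos)

lemma power_p_eq_self_imp_prime_subfield:
  assumes "(y :: 'a) ^ p = y"
  shows "y \<in> prime_subfield"
proof (rule ccontr)
  assume "y \<notin> prime_subfield"
  define P :: "'a poly" where "P = monom 1 p - [:0, 1:]"
  have coeff_P: "coeff P p = 1"
    using p_gt_1 by (simp add: P_def coeff_pCons split: nat.split)
  have "degree P \<le> p"
    unfolding P_def
    by (rule degree_le) (use p_gt_1 in \<open>auto simp: coeff_pCons split: nat.split\<close>)
  from coeff_P have "P \<noteq> 0" by auto
  have "poly P z = 0" if "z \<in> insert y prime_subfield" for z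
  proof -
    have "z ^ p = z"
      using that assms of_nat_power_p by (auto simp: prime_subfield_iff)
    then show ?thesis by (simp add: P_def poly_monom)
  qed
  then have "insert y prime_subfield \<subseteq> {z. poly P z = 0}"
    by blast
  then have "card (insert y (prime_subfield :: 'a set)) \<le> card {z. poly P z = 0}"
    by (intro card_mono) auto
  also have "\<dots> \<le> degree P" by (rule card_poly_roots_bound[OF \<open>P \<noteq> 0\<close>])
  finally show False
    using \<open>y \<notin> prime_subfield\<close> \<open>degree P \<le> p\<close> card_prime_subfield by simp
qed

lemma abs_trace_add: "abs_trace m (x + y) = abs_trace m x + abs_trace m (y :: 'a)"
proof -
  have "(x + y) ^ (p ^ i) = x ^ (p ^ i) + y ^ (p ^ i)" for i
    using freshmans_dream'[of "p ^ i" i x y] prime_p char by simp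
  then show ?thesis
    by (simp add: abs_trace_def char sum.distrib)
qed

lemma abs_trace_0 [simp]: "abs_trace m (0 :: 'a) = 0"
  by (simp add: abs_trace_def char p_pos zero_power)

lemma abs_trace_uminus: "abs_trace m (- x) = - abs_trace m (x :: 'a)"
  using abs_trace_add[of x "- x"] by (simp add: add_eq_0_iff)

lemma abs_trace_of_nat_mult: "abs_trace m (of_nat k * x) = of_nat k * abs_trace m (x :: 'a)"
  by (induction k) (simp_all add: distrib_right abs_trace_add)

lemma abs_trace_in_prime_subfield: "abs_trace m (x :: 'a) \<in> prime_subfield"
proof (rule power_p_eq_self_imp_prime_subfield)
  define g where "g i = x ^ (p ^ i)" for i
  have "abs_trace m x ^ p = (\<Sum>i<m. (x ^ (p ^ i)) ^ p)"
    unfolding abs_trace_def char by (rule freshmans_dream_sum) (simp_all add: prime_p char)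
  also have "\<dots> = (\<Sum>i<m. g (Suc i))"
    by (simp add: g_def power_mult[symmetric] mult.commute)
  also have "\<dots> = (\<Sum>i<m. g i)"
    using sum.lessThan_Suc_shift[of g m] field_power_card_eq_self[of x]
    by (simp add: g_def card)
  finally show "abs_trace m x ^ p = abs_trace m x"
    by (simp add: g_def abs_trace_def char)
qed

lemma abs_trace_nonzero: "\<exists>x :: 'a. abs_trace m x \<noteq> 0"
proof (rule ccontr)
  assume "\<not> (\<exists>x :: 'a. abs_trace m x \<noteq> 0)"
  define T :: "'a poly" where "T = (\<Sum>i<m. monom 1 (p ^ i))"
  have poly_T: "poly T x = abs_trace m x" for x
    by (simp add: T_def abs_trace_def char poly_sum poly_monom)
  have coeff_T: "coeff T k = (\<Sum>i<m. if p ^ i = k then 1 else 0)" for k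
    by (simp add: T_def coeff_sum)
  have "coeff T (p ^ (m - 1)) = (\<Sum>i<m. if i = m - 1 then 1 else 0)"
    unfolding coeff_T using p_gt_1 by (intro sum.cong) auto
  also have "\<dots> = 1"
    using m_pos by simp
  finally have "T \<noteq> 0" by auto
  have "degree T \<le> p ^ (m - 1)"
  proof (rule degree_le, intro allI impI)
    fix k assume k: "p ^ (m - 1) < k"
    have "p ^ i \<noteq> k" if "i < m" for i
    proof -
      have "p ^ i \<le> p ^ (m - 1)"
        using that p_gt_1 by (intro power_increasing) auto
      with k show ?thesis by linarith
    qed
    then show "coeff T k = 0"
      unfolding coeff_T by (intro sum.neutral) auto
  qed
  have "CARD('a) \<le> card {z. poly T z = 0}"
    using \<open>\<not> (\<exists>x. abs_trace m x \<noteq> 0)\<close> by (intro card_mono) (auto simp: poly_T)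
  also have "\<dots> \<le> degree T" by (rule card_poly_roots_bound[OF \<open>T \<noteq> 0\<close>])
  also have "\<dots> \<le> p ^ (m - 1)"
    by fact
  also have "\<dots> < p ^ m"
    using p_gt_1 m_pos by (intro power_strict_increasing) auto
  finally show False using card by simp
qed

section \<open>Additive characters\<close>

definition fp_char :: "'a \<Rightarrow> complex" where
  "fp_char c = zeta p ^ fp_rep c"

definition add_char :: "'a \<Rightarrow> 'a \<Rightarrow> complex" where
  "add_char b x = fp_char (abs_trace m (b * x))"

lemma fp_char_of_nat: "fp_char (of_nat k) = zeta p ^ k"
  using zeta_power_mod[OF p_pos, of k] by (simp add: fp_char_def fp_rep_of_nat)

lemma fp_char_0 [simp]: "fp_char 0 = 1"
  using fp_char_of_nat[of 0] by simp

lemma fp_char_add: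
  assumes "a \<in> prime_subfield" "b \<in> prime_subfield"
  shows "fp_char (a + b) = fp_char a * fp_char b"
proof -
  have "a + b = of_nat (fp_rep a + fp_rep b)"
    using of_nat_fp_rep[OF assms(1)] of_nat_fp_rep[OF assms(2)] by simp
  then have "fp_char (a + b) = zeta p ^ (fp_rep a + fp_rep b)"
    by (simp only: fp_char_of_nat)
  then show ?thesis
    by (simp add: fp_char_def power_add)
qed

lemma fp_char_ne_1:
  assumes "c \<in> prime_subfield" "c \<noteq> 0"
  shows "fp_char c \<noteq> 1"
proof
  assume "fp_char c = 1"
  then have "p dvd fp_rep c"
    by (simp add: fp_char_def zeta_power_eq_1_iff[OF p_pos])
  then have "fp_rep c = 0"
    using fp_rep_less[OF assms(1)] by (auto dest: dvd_imp_le)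
  then show False
    using of_nat_fp_rep[OF assms(1)] assms(2) by simp
qed

lemma add_char_add: "add_char b (x + y) = add_char b x * add_char b y"
  by (simp add: add_char_def distrib_left abs_trace_add fp_char_add abs_trace_in_prime_subfield)

lemma add_char_0_left [simp]: "add_char 0 x = 1"
  by (simp add: add_char_def)

lemma add_char_0_right [simp]: "add_char b 0 = 1"
  by (simp add: add_char_def)

lemma add_char_commute: "add_char b x = add_char x b"
  by (simp add: add_char_def mult.commute)

lemma add_char_diff: "add_char b y * add_char b (- x) = add_char b (y - x)"
  using add_char_add[of b y "- x"] by simp

lemma sum_add_char: "(\<Sum>x\<in>UNIV. add_char b x) = (if b = 0 then of_nat CARD('a) else 0)"
proof (cases "b = 0")
  case False
  obtain x1 :: 'a where x1: "abs_trace m x1 \<noteq> 0"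
    using abs_trace_nonzero by blast
  define x0 where "x0 = x1 / b"
  have "add_char b x0 \<noteq> 1"
    using False fp_char_ne_1[OF abs_trace_in_prime_subfield x1] by (simp add: add_char_def x0_def)
  \<comment> \<open>translating by \<open>x0\<close> multiplies the sum by \<open>add_char b x0 \<noteq> 1\<close>\<close>
  have "(\<Sum>x\<in>UNIV. add_char b x) = (\<Sum>x\<in>UNIV. add_char b (x + x0))"
    by (rule sum.reindex_bij_witness[of _ "\<lambda>x. x + x0" "\<lambda>x. x - x0"]) auto
  also have "\<dots> = add_char b x0 * (\<Sum>x\<in>UNIV. add_char b x)"
    by (simp add: add_char_add sum_distrib_left mult.commute)
  finally have "(1 - add_char b x0) * (\<Sum>x\<in>UNIV. add_char b x) = 0"
    by (simp add: algebra_simps)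
  with \<open>add_char b x0 \<noteq> 1\<close> False show ?thesis by simp
qed simp

lemma sum_add_char_left: "(\<Sum>b\<in>UNIV. add_char b x) = (if x = 0 then of_nat CARD('a) else 0)"
  using sum_add_char[of x] by (simp add: add_char_commute)

lemma fourier_inversion:
  "(\<Sum>b\<in>UNIV. (\<Sum>y\<in>UNIV. \<phi> y * add_char b y) * add_char b (- x)) = of_nat CARD('a) * \<phi> x"
proof -
  have "(\<Sum>b\<in>UNIV. (\<Sum>y\<in>UNIV. \<phi> y * add_char b y) * add_char b (- x))
      = (\<Sum>b\<in>UNIV. \<Sum>y\<in>UNIV. \<phi> y * add_char b (y - x))"
    by (simp add: sum_distrib_right mult.assoc add_char_diff)
  also have "\<dots> = (\<Sum>y\<in>UNIV. \<phi> y * (\<Sum>b\<in>UNIV. add_char b (y - x)))"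
    by (subst sum.swap) (simp add: sum_distrib_left)
  also have "\<dots> = (\<Sum>y\<in>UNIV. if y = x then \<phi> y * of_nat CARD('a) else 0)"
    by (rule sum.cong) (auto simp: sum_add_char_left)
  finally show ?thesis by simp
qed

lemma add_char_of_nat_mult:
  "add_char g (of_nat a * x) = zeta p ^ (a * fp_rep (abs_trace m (g * x)))"
proof -
  have "abs_trace m (g * (of_nat a * x)) = of_nat a * abs_trace m (g * x)"
    by (subst mult.left_commute) (rule abs_trace_of_nat_mult)
  also have "\<dots> = of_nat (a * fp_rep (abs_trace m (g * x)))"
    using of_nat_fp_rep[OF abs_trace_in_prime_subfield[of "g * x"]] by simp
  finally show ?thesis
    unfolding add_char_def by (simp only: fp_char_of_nat)
qed

lemma of_nat_neq_0: "0 < a \<Longrightarrow> a < p \<Longrightarrow> (of_nat a :: 'a) \<noteq> 0"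
  using of_nat_eq_iff_mod_p[of a 0] by simp

lemma sum_fp_char_nonzero_multiples:
  fixes c :: 'a
  assumes "c \<in> prime_subfield"
  shows "(\<Sum>a\<in>{1..<p}. zeta p ^ (a * fp_rep c)) = of_int (if c = 0 then int p - 1 else - 1)"
proof -
  have "p dvd fp_rep c \<longleftrightarrow> fp_rep c = 0"
    using fp_rep_less[OF assms] nat_dvd_not_less[of "fp_rep c" p] by auto
  also have "\<dots> \<longleftrightarrow> c = 0"
    using of_nat_fp_rep[OF assms] fp_rep_of_nat[of 0] by auto
  finally have "p dvd fp_rep c \<longleftrightarrow> c = 0" .
  moreover have "{..<p} = insert 0 {1..<p}"
    using p_pos by auto
  then have "(\<Sum>a\<in>{1..<p}. zeta p ^ (a * fp_rep c)) = (\<Sum>a<p. zeta p ^ (a * fp_rep c)) - 1"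
    by simp
  ultimately show ?thesis
    using p_pos by (simp add: sum_zeta_powers of_nat_diff)
qed

lemma sum_add_char_scaling_invariant:
  assumes D: "\<And>a x. 0 < a \<Longrightarrow> a < p \<Longrightarrow> x \<in> D \<Longrightarrow> of_nat a * x \<in> D"
  shows "of_nat (p - 1) * (\<Sum>x\<in>D. add_char g x)
       = of_int (\<Sum>x\<in>D. if abs_trace m (g * x) = 0 then int p - 1 else - 1)"
proof -
  have scale: "(\<Sum>x\<in>D. add_char g x) = (\<Sum>x\<in>D. add_char g (of_nat a * x))"
    if a: "a \<in> {1..<p}" for a
  proof -
    have inj: "inj_on (\<lambda>x. (of_nat a :: 'a) * x) D"
      using of_nat_neq_0[of a] a by (auto simp: inj_on_def)
    moreover have "(\<lambda>x. of_nat a * x) ` D = D"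
      using D a by (intro endo_inj_surj inj) auto
    ultimately show ?thesis
      by (metis (no_types, lifting) sum.reindex_cong)
  qed
  have "of_nat (p - 1) * (\<Sum>x\<in>D. add_char g x) = (\<Sum>a\<in>{1..<p}. \<Sum>x\<in>D. add_char g x)"
    by simp
  also have "\<dots> = (\<Sum>a\<in>{1..<p}. \<Sum>x\<in>D. add_char g (of_nat a * x))"
    using scale by (rule sum.cong[OF refl])
  also have "\<dots> = (\<Sum>x\<in>D. \<Sum>a\<in>{1..<p}. zeta p ^ (a * fp_rep (abs_trace m (g * x))))"
    by (subst sum.swap) (simp add: add_char_of_nat_mult)
  also have "\<dots> = (\<Sum>x\<in>D. of_int (if abs_trace m (g * x) = 0 then int p - 1 else - 1))"
    using sum_fp_char_nonzero_multiples[OF abs_trace_in_prime_subfield] by simp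
  finally show ?thesis by simp
qed

end

section \<open>The translation scheme of \<open>f\<close>\<close>

locale walsh_setting = prime_power_field p m for p m +
  fixes f :: "'a::{finite,field} \<Rightarrow> 'a"
  assumes f_in_prime_subfield: "\<forall>x. f x \<in> prime_subfield"
    and f_0: "f 0 = 0"
    and f_scale: "\<forall>k x. 0 < k \<and> k < p \<longrightarrow> f (of_nat k * x) = f x"
begin

definition rel_indices :: "'a option set" where
  "rel_indices = insert None (Some ` f ` (UNIV - {0}))"

definition cell :: "'a option \<Rightarrow> 'a set" where
  "cell j = (case j of None \<Rightarrow> {0} | Some i \<Rightarrow> Dstar f i)"

definition cell_of :: "'a \<Rightarrow> 'a option" where
  "cell_of x = (if x = 0 then None else Some (f x))"

lemma finite_rel_indices [simp]: "finite rel_indices"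
  by (simp add: rel_indices_def)

lemma card_rel_indices: "card rel_indices = card (f ` (UNIV - {0})) + 1"
  by (simp add: rel_indices_def card_image)

lemma in_cell_iff: "x \<in> cell j \<longleftrightarrow> j = cell_of x"
  by (cases j) (auto simp: cell_def cell_of_def Dstar_def)

lemma cell_of_in_rel_indices: "cell_of x \<in> rel_indices"
  by (auto simp: cell_of_def rel_indices_def)

lemma cell_nonempty: "j \<in> rel_indices \<Longrightarrow> cell j \<noteq> {}"
  by (auto simp: rel_indices_def cell_def Dstar_def)

lemma rel_of_eq: "rel_of f j = {(u, v). u - v \<in> cell j}"
  by (cases j) (auto simp: rel_of_def cell_def)

lemma f_uminus: "f (- x) = f x"
proof -
  have "(of_nat (p - 1) :: 'a) + 1 = of_nat p"
    using p_pos by (simp add: of_nat_diff)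
  then have "(of_nat (p - 1) :: 'a) = - 1"
    using char of_nat_CHAR[where ?'a = 'a] by (simp add: eq_neg_iff_add_eq_0)
  moreover have "0 < p - 1 \<and> p - 1 < p"
    using p_gt_1 by simp
  then have "f (of_nat (p - 1) * x) = f x"
    using f_scale by blast
  ultimately show ?thesis by simp
qed

lemma cell_of_uminus: "cell_of (- x) = cell_of x"
  by (simp add: cell_of_def f_uminus)

lemma sum_over_cells: "(\<Sum>t\<in>UNIV. G t) = (\<Sum>j\<in>rel_indices. \<Sum>t\<in>cell j. G t)"
proof -
  have "(\<Sum>j\<in>rel_indices. sum G {t \<in> UNIV. cell_of t = j}) = sum G UNIV"
    by (rule sum.group) (auto simp: cell_of_in_rel_indices)
  moreover have "{t \<in> UNIV. cell_of t = j} = cell j" for j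
    by (auto simp: in_cell_iff)
  ultimately show ?thesis by simp
qed

definition intersection_number :: "'a option \<Rightarrow> 'a option \<Rightarrow> 'a \<Rightarrow> nat" where
  "intersection_number a b t = card {w. t - w \<in> cell a \<and> w \<in> cell b}"

lemma card_rel_path:
  "card {w \<in> UNIV. (u, w) \<in> rel_of f a \<and> (w, v) \<in> rel_of f b} = intersection_number a b (u - v)"
proof -
  have "bij_betw (\<lambda>w. w - v) {w \<in> UNIV. (u, w) \<in> rel_of f a \<and> (w, v) \<in> rel_of f b}
      {w. u - v - w \<in> cell a \<and> w \<in> cell b}"
    by (rule bij_betw_byWitness[where f' = "\<lambda>w. w + v"]) (auto simp: rel_of_eq algebra_simps)
  then show ?thesis
    unfolding intersection_number_def by (rule bij_betw_same_card)
qed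

lemma sym_assoc_scheme_iff_intersection_numbers_const:
  "sym_assoc_scheme UNIV rel_indices (rel_of f) \<longleftrightarrow>
    (\<forall>a\<in>rel_indices. \<forall>b\<in>rel_indices. \<forall>c\<in>rel_indices.
      \<exists>n. \<forall>t\<in>cell c. intersection_number a b t = n)"
proof -
  have nonempty: "rel_of f j \<noteq> {}" if j: "j \<in> rel_indices" for j
  proof -
    obtain x where "x \<in> cell j" using cell_nonempty[OF j] by blast
    then have "(x, 0) \<in> rel_of f j" by (simp add: rel_of_eq)
    then show ?thesis by blast
  qed
  have symmetric: "(v, u) \<in> rel_of f j" if "(u, v) \<in> rel_of f j" for u v j
  proof -
    have "cell_of (v - u) = cell_of (u - v)"
      using cell_of_uminus[of "u - v"] by simp
    then show ?thesis using that by (simp add: rel_of_eq in_cell_iff)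
  qed
  have disjoint: "rel_of f j \<inter> rel_of f k = {}" if "j \<noteq> k" for j k
    using that by (auto simp: rel_of_eq in_cell_iff)
  have covering: "(\<Union>j\<in>rel_indices. rel_of f j) = UNIV \<times> UNIV"
    using cell_of_in_rel_indices by (auto simp: rel_of_eq in_cell_iff)
  have diagonal: "rel_of f None = Id_on UNIV"
    by (auto simp: rel_of_def)
  have path_count: "(\<exists>n. \<forall>u v. (u, v) \<in> rel_of f c \<longrightarrow>
          card {w \<in> UNIV. (u, w) \<in> rel_of f a \<and> (w, v) \<in> rel_of f b} = n)
        \<longleftrightarrow> (\<exists>n. \<forall>t\<in>cell c. intersection_number a b t = n)" for a b c
  proof -
    have "(u, v) \<in> rel_of f c \<longleftrightarrow> u - v \<in> cell c" for u v
      by (simp add: rel_of_eq)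
    moreover have "t \<in> cell c \<longleftrightarrow> (t, 0) \<in> rel_of f c" for t
      by (simp add: rel_of_eq)
    ultimately show ?thesis
      unfolding card_rel_path by (metis diff_zero)
  qed
  show ?thesis
    unfolding sym_assoc_scheme_def path_count
    using nonempty symmetric disjoint covering diagonal by (auto simp: rel_indices_def)
qed

definition char_sum :: "'a option \<Rightarrow> 'a \<Rightarrow> complex" where
  "char_sum j g = (\<Sum>x\<in>cell j. add_char g x)"

abbreviation char_sums :: "('a \<Rightarrow> complex) set" where
  "char_sums \<equiv> char_sum ` rel_indices"

lemma char_sum_None: "char_sum None = 1"
  by (simp add: fun_eq_iff char_sum_def cell_def)

lemma sum_intersection_number_add_char:
  "(\<Sum>t\<in>UNIV. of_nat (intersection_number a b t) * add_char g t) = char_sum a g * char_sum b g"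
proof -
  have "(\<Sum>t\<in>UNIV. of_nat (intersection_number a b t) * add_char g t)
      = (\<Sum>t\<in>UNIV. \<Sum>w\<in>cell b. if t - w \<in> cell a then add_char g t else 0)"
    by (rule sum.cong) (simp_all add: intersection_number_def sum.If_cases Collect_conj_eq Int_commute
        sum_distrib_right flip: sum.inter_filter)
  also have "\<dots> = (\<Sum>w\<in>cell b. \<Sum>y\<in>cell a. add_char g (y + w))"
  proof (subst sum.swap, rule sum.cong[OF refl])
    fix w
    have "(\<Sum>t\<in>UNIV. if t - w \<in> cell a then add_char g t else 0) = sum (add_char g) {t. t - w \<in> cell a}"
      by (simp add: sum.If_cases)
    also have "\<dots> = (\<Sum>y\<in>cell a. add_char g (y + w))"
      by (rule sum.reindex_bij_witness[of _ "\<lambda>y. y + w" "\<lambda>t. t - w"]) auto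
    finally show "(\<Sum>t\<in>UNIV. if t - w \<in> cell a then add_char g t else 0) = \<dots>" .
  qed
  also have "\<dots> = char_sum a g * char_sum b g"
    by (simp add: char_sum_def add_char_add sum_product sum.swap[of _ "cell b"] mult.commute)
  finally show ?thesis .
qed

lemma char_sum_inversion:
  "(\<Sum>g\<in>UNIV. char_sum j g * add_char g (- x)) = (if x \<in> cell j then of_nat CARD('a) else 0)"
proof -
  have "char_sum j g = (\<Sum>y\<in>UNIV. of_bool (y \<in> cell j) * add_char g y)" for g
    by (simp add: char_sum_def)
  then show ?thesis
    using fourier_inversion[of "\<lambda>y. of_bool (y \<in> cell j)" x] by simp
qed

lemma inj_on_char_sum: "inj_on char_sum rel_indices"
proof (rule inj_onI)
  fix a b assume "a \<in> rel_indices" "b \<in> rel_indices" "char_sum a = char_sum b"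
  obtain x where x: "x \<in> cell a" using cell_nonempty[OF \<open>a \<in> rel_indices\<close>] by blast
  then have "x \<in> cell b"
    using char_sum_inversion[of a x] char_sum_inversion[of b x] \<open>char_sum a = char_sum b\<close>
    by (auto split: if_splits)
  with x show "a = b" by (simp add: in_cell_iff)
qed

lemma independent_char_sums: "\<not> cfun.dependent char_sums"
proof (rule cfun.independent_if_scalars_zero)
  fix c v
  assume sum0: "(\<Sum>w\<in>char_sums. fscale (c w) w) = 0" and "v \<in> char_sums"
  then obtain j0 where j0: "j0 \<in> rel_indices" "v = char_sum j0" by auto
  obtain x where x: "x \<in> cell j0" using cell_nonempty[OF j0(1)] by blast
  have "0 = (\<Sum>g\<in>UNIV. (\<Sum>j\<in>rel_indices. c (char_sum j) * char_sum j g) * add_char g (- x))"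
    using sum0 by (simp add: sum.reindex[OF inj_on_char_sum] sum_fun_apply fun_eq_iff)
  also have "\<dots> = (\<Sum>j\<in>rel_indices. c (char_sum j) * (\<Sum>g\<in>UNIV. char_sum j g * add_char g (- x)))"
    by (simp add: sum_distrib_left sum_distrib_right mult.assoc sum.swap[of _ UNIV rel_indices])
  also have "\<dots> = c v * of_nat CARD('a)"
    using j0 x by (simp add: char_sum_inversion in_cell_iff if_distrib sum.If_cases cong: if_cong)
  finally show "c v = 0" by simp
qed simp

lemma one_in_span_char_sums: "1 \<in> cfun.span char_sums"
  by (metis rel_indices_def char_sum_None cfun.span_base imageI insertI1)

lemma intersection_number_eq_coefficient:
  assumes eq: "char_sum a * char_sum b = (\<Sum>j\<in>rel_indices. fscale (c j) (char_sum j))"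
    and "k \<in> rel_indices" and "t \<in> cell k"
  shows "of_nat (intersection_number a b t) = c k"
proof -
  have "of_nat CARD('a) * of_nat (intersection_number a b t)
      = (\<Sum>g\<in>UNIV. (\<Sum>y\<in>UNIV. of_nat (intersection_number a b y) * add_char g y) * add_char g (- t))"
    by (rule fourier_inversion[symmetric])
  also have "\<dots> = (\<Sum>g\<in>UNIV. (\<Sum>j\<in>rel_indices. c j * char_sum j g) * add_char g (- t))"
    using fun_cong[OF eq] by (simp add: sum_intersection_number_add_char sum_fun_apply)
  also have "\<dots> = (\<Sum>j\<in>rel_indices. c j * (\<Sum>g\<in>UNIV. char_sum j g * add_char g (- t)))"
    by (simp add: sum_distrib_left sum_distrib_right mult.assoc sum.swap[of _ UNIV rel_indices])
  also have "\<dots> = c k * of_nat CARD('a)"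
    using assms(2,3) by (simp add: char_sum_inversion in_cell_iff if_distrib sum.If_cases cong: if_cong)
  finally show ?thesis by simp
qed

lemma intersection_numbers_const_iff_in_span:
  "(\<forall>c\<in>rel_indices. \<exists>n. \<forall>t\<in>cell c. intersection_number a b t = n)
    \<longleftrightarrow> char_sum a * char_sum b \<in> cfun.span char_sums"
proof
  assume "\<forall>c\<in>rel_indices. \<exists>n. \<forall>t\<in>cell c. intersection_number a b t = n"
  then obtain N
    where N: "\<And>c t. c \<in> rel_indices \<Longrightarrow> t \<in> cell c \<Longrightarrow> intersection_number a b t = N c"
    by metis
  have "char_sum a * char_sum b = (\<Sum>c\<in>rel_indices. fscale (of_nat (N c)) (char_sum c))"
  proof
    fix g
    have "(char_sum a * char_sum b) g
        = (\<Sum>c\<in>rel_indices. \<Sum>t\<in>cell c. of_nat (intersection_number a b t) * add_char g t)"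
      by (simp flip: sum_intersection_number_add_char sum_over_cells)
    also have "\<dots> = (\<Sum>c\<in>rel_indices. of_nat (N c) * char_sum c g)"
      by (rule sum.cong) (simp_all add: N char_sum_def sum_distrib_left)
    finally show "(char_sum a * char_sum b) g = (\<Sum>c\<in>rel_indices. fscale (of_nat (N c)) (char_sum c)) g"
      by (simp add: sum_fun_apply)
  qed
  also have "\<dots> \<in> cfun.span char_sums"
    by (intro cfun.span_sum cfun.span_scale cfun.span_base) auto
  finally show "char_sum a * char_sum b \<in> cfun.span char_sums" .
next
  assume "char_sum a * char_sum b \<in> cfun.span char_sums"
  then obtain u where "char_sum a * char_sum b = (\<Sum>w\<in>char_sums. fscale (u w) w)"
    using cfun.span_finite[of char_sums] by auto
  then have "char_sum a * char_sum b = (\<Sum>j\<in>rel_indices. fscale (u (char_sum j)) (char_sum j))"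
    by (simp add: sum.reindex[OF inj_on_char_sum])
  then have coeff: "\<And>c t. c \<in> rel_indices \<Longrightarrow> t \<in> cell c
      \<Longrightarrow> of_nat (intersection_number a b t) = u (char_sum c)"
    by (rule intersection_number_eq_coefficient[where c = "\<lambda>j. u (char_sum j)"])
  show "\<forall>c\<in>rel_indices. \<exists>n. \<forall>t\<in>cell c. intersection_number a b t = n"
  proof
    fix c assume "c \<in> rel_indices"
    then obtain t0 where "t0 \<in> cell c"
      using cell_nonempty by blast
    then have "intersection_number a b t = intersection_number a b t0" if "t \<in> cell c" for t
      using coeff[OF \<open>c \<in> rel_indices\<close> that] coeff[OF \<open>c \<in> rel_indices\<close> \<open>t0 \<in> cell c\<close>]
      by (metis of_nat_eq_iff)
    then show "\<exists>n. \<forall>t\<in>cell c. intersection_number a b t = n" by blast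
  qed
qed

theorem sym_assoc_scheme_iff_span_mult_closed:
  "sym_assoc_scheme UNIV rel_indices (rel_of f)
     \<longleftrightarrow> (\<forall>u\<in>char_sums. \<forall>v\<in>char_sums. u * v \<in> cfun.span char_sums)"
  by (simp add: sym_assoc_scheme_iff_intersection_numbers_const intersection_numbers_const_iff_in_span)

end

section \<open>Counting the Walsh values\<close>

lemma card_image_eq_if_same_fibres:
  assumes "finite A" and "\<And>x y. x \<in> A \<Longrightarrow> y \<in> A \<Longrightarrow> g x = g y \<longleftrightarrow> h x = h y"
  shows "card (g ` A) = card (h ` A)"
proof -
  define S where "S = (\<lambda>x. (g x, h x)) ` A"
  have "fst ` S = g ` A" "snd ` S = h ` A"
    unfolding S_def by force+
  moreover have "inj_on fst S" "inj_on snd S"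
    unfolding S_def inj_on_def using assms(2) by auto
  ultimately show ?thesis
    by (metis card_image)
qed

context walsh_setting
begin

lemma Dstar_of_nat_iff: "k < p \<Longrightarrow> x \<in> Dstar f (of_nat k) \<longleftrightarrow> x \<noteq> 0 \<and> fp_rep (f x) = k"
  using of_nat_fp_rep[OF f_in_prime_subfield[rule_format, of x]] fp_rep_of_nat[of k]
  by (auto simp: Dstar_def)

lemma sum_nonzero_by_level:
  "(\<Sum>x\<in>UNIV - {0}. G x) = (\<Sum>k<p. \<Sum>x\<in>Dstar f (of_nat k). G x)"
proof -
  have "(\<Sum>x\<in>UNIV - {0}. G x) = (\<Sum>k<p. \<Sum>x\<in>{x \<in> UNIV - {0}. fp_rep (f x) = k}. G x)"
    by (rule sum.group[symmetric]) (auto simp: fp_rep_less f_in_prime_subfield)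
  also have "\<dots> = (\<Sum>k<p. \<Sum>x\<in>Dstar f (of_nat k). G x)"
  proof (rule sum.cong[OF refl])
    fix k assume "k \<in> {..<p}"
    then have "{x \<in> UNIV - {0}. fp_rep (f x) = k} = Dstar f (of_nat k)"
      by (auto simp: Dstar_of_nat_iff)
    then show "sum G {x \<in> UNIV - {0}. fp_rep (f x) = k} = sum G (Dstar f (of_nat k))"
      by simp
  qed
  finally show ?thesis .
qed

lemma sum_char_sums: "(\<Sum>k<p. char_sum (Some (of_nat k)) g) = (\<Sum>x\<in>UNIV. add_char g x) - 1"
  using sum_nonzero_by_level[of "add_char g"] sum.remove[of UNIV 0 "add_char g"]
  by (simp add: char_sum_def cell_def)

lemma walsh_eq_char_sums:
  "walsh m f \<beta> = 1 + (\<Sum>k<p. zeta p ^ k * char_sum (Some (of_nat k)) (- \<beta>))"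
proof -
  have "zeta CHAR('a) ^ fp_rep (f x - abs_trace m (\<beta> * x)) = fp_char (f x) * add_char (- \<beta>) x" for x
  proof -
    have "f x - abs_trace m (\<beta> * x) = f x + abs_trace m (- \<beta> * x)"
      by (simp add: abs_trace_uminus)
    then have "fp_char (f x - abs_trace m (\<beta> * x)) = fp_char (f x) * add_char (- \<beta>) x"
      unfolding add_char_def
      by (simp only: fp_char_add[OF f_in_prime_subfield[rule_format] abs_trace_in_prime_subfield])
    then show ?thesis
      by (simp add: fp_char_def char)
  qed
  then have "walsh m f \<beta> = (\<Sum>x\<in>UNIV. fp_char (f x) * add_char (- \<beta>) x)"
    by (simp add: walsh_def)
  also have "\<dots> = 1 + (\<Sum>x\<in>UNIV - {0}. fp_char (f x) * add_char (- \<beta>) x)"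
    by (simp add: sum.remove[of UNIV 0] f_0)
  also have "(\<Sum>x\<in>UNIV - {0}. fp_char (f x) * add_char (- \<beta>) x)
      = (\<Sum>k<p. zeta p ^ k * char_sum (Some (of_nat k)) (- \<beta>))"
    unfolding sum_nonzero_by_level
    by (intro sum.cong refl) (auto simp: char_sum_def cell_def Dstar_def fp_char_of_nat sum_distrib_left)
  finally show ?thesis .
qed

lemma char_sum_rational:
  "of_nat (p - 1) * char_sum (Some c) g
     = of_int (\<Sum>x\<in>Dstar f c. if abs_trace m (g * x) = 0 then int p - 1 else - 1)"
  unfolding char_sum_def cell_def option.case
  by (rule sum_add_char_scaling_invariant) (auto simp: Dstar_def f_scale of_nat_neq_0)

lemma walsh_eq_iff_char_sums_eq:
  assumes "g \<noteq> 0" "g' \<noteq> 0"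
  shows "walsh m f (- g) = walsh m f (- g')
    \<longleftrightarrow> (\<forall>k<p. char_sum (Some (of_nat k)) g = char_sum (Some (of_nat k)) g')"
proof
  assume walsh_eq: "walsh m f (- g) = walsh m f (- g')"
  let ?d = "\<lambda>k. char_sum (Some (of_nat k)) g - char_sum (Some (of_nat k)) g'"
  define z where "z k = (\<Sum>x\<in>Dstar f (of_nat k). if abs_trace m (g * x) = 0 then int p - 1 else - 1)
    - (\<Sum>x\<in>Dstar f (of_nat k). if abs_trace m (g' * x) = 0 then int p - 1 else - 1)" for k
  have z: "of_int (z k) = of_nat (p - 1) * ?d k" for k
    by (simp only: z_def of_int_diff right_diff_distrib char_sum_rational)
  have "(\<Sum>k<p. of_int (z k) * zeta p ^ k) = of_nat (p - 1) * (\<Sum>k<p. zeta p ^ k * ?d k)"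
    by (simp add: z sum_distrib_left mult_ac)
  also have "(\<Sum>k<p. zeta p ^ k * ?d k) = 0"
    using walsh_eq by (simp add: walsh_eq_char_sums right_diff_distrib sum_subtractf)
  finally have rel: "(\<Sum>k<p. of_int (z k) * zeta p ^ k) = 0" by simp
  have "(of_int (\<Sum>k<p. z k) :: complex) = of_nat (p - 1) * (\<Sum>k<p. ?d k)"
    by (simp add: z sum_distrib_left)
  also have "(\<Sum>k<p. ?d k) = 0"
    using assms by (simp add: sum_subtractf sum_char_sums sum_add_char)
  finally have "(\<Sum>k<p. z k) = 0"
    by (simp only: mult_zero_right of_int_eq_0_iff)
  then have "z k = 0" if "k < p" for k
    using zeta_integer_relation_zero_sum[OF prime_p rel _ that] by blast
  then have "of_nat (p - 1) * ?d k = 0" if "k < p" for k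
    using z[of k] that by simp
  then show "\<forall>k<p. char_sum (Some (of_nat k)) g = char_sum (Some (of_nat k)) g'"
    using p_gt_1 by simp
qed (simp add: walsh_eq_char_sums)

lemma char_sum_Some_notin: "Some c \<notin> rel_indices \<Longrightarrow> char_sum (Some c) g = 0"
proof -
  assume notin: "Some c \<notin> rel_indices"
  have "x \<notin> Dstar f c" for x
  proof
    assume "x \<in> Dstar f c"
    then have "Some c = Some (f x)" "x \<in> UNIV - {0}"
      by (auto simp: Dstar_def)
    with notin show False
      by (auto simp: rel_indices_def)
  qed
  then have "Dstar f c = {}"
    by blast
  then show ?thesis
    by (simp add: char_sum_def cell_def)
qed

lemma profile_eq_iff_char_sums_eq:
  "profile char_sums g = profile char_sums g'
    \<longleftrightarrow> (\<forall>k<p. char_sum (Some (of_nat k)) g = char_sum (Some (of_nat k)) g')"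
proof -
  have "profile char_sums g = profile char_sums g'
      \<longleftrightarrow> (\<forall>j\<in>rel_indices. char_sum j g = char_sum j g')"
    by (auto simp: profile_eq_iff)
  also have "\<dots> \<longleftrightarrow> (\<forall>k<p. char_sum (Some (of_nat k)) g = char_sum (Some (of_nat k)) g')"
  proof (intro iffI allI impI ballI)
    fix k assume "\<forall>j\<in>rel_indices. char_sum j g = char_sum j g'"
    then show "char_sum (Some (of_nat k)) g = char_sum (Some (of_nat k)) g'"
      by (cases "Some (of_nat k) \<in> rel_indices") (auto simp: char_sum_Some_notin)
  next
    fix j assume eq: "\<forall>k<p. char_sum (Some (of_nat k)) g = char_sum (Some (of_nat k)) g'"
      and "j \<in> rel_indices"
    then consider "j = None" | i where "j = Some i" "i \<in> prime_subfield"
      using f_in_prime_subfield by (auto simp: rel_indices_def)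
    then show "char_sum j g = char_sum j g'"
    proof cases
      case (2 i)
      with eq fp_rep_less have "char_sum (Some (of_nat (fp_rep i))) g = char_sum (Some (of_nat (fp_rep i))) g'"
        by blast
      with 2 show ?thesis
        by (simp add: of_nat_fp_rep)
    qed (simp add: char_sum_None)
  qed
  finally show ?thesis .
qed

lemma profile_eq_0_iff: "profile char_sums g = profile char_sums 0 \<longleftrightarrow> g = 0"
proof
  assume "profile char_sums g = profile char_sums 0"
  then have "(\<Sum>j\<in>rel_indices. char_sum j g) = (\<Sum>j\<in>rel_indices. char_sum j 0)"
    by (auto simp: profile_eq_iff intro: sum.cong)
  then have "(\<Sum>x\<in>UNIV. add_char g x) = (\<Sum>x\<in>UNIV. add_char 0 x)"
    unfolding char_sum_def sum_over_cells[symmetric] .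
  then show "g = 0"
    by (auto simp: sum_add_char split: if_splits)
qed simp

lemma card_profiles_char_sums:
  "card (range (profile char_sums)) = card (walsh m f ` (UNIV - {0})) + 1"
proof -
  let ?P = "profile char_sums"
  have "range ?P = insert (?P 0) (?P ` (UNIV - {0}))"
    by auto
  moreover have "?P 0 \<notin> ?P ` (UNIV - {0})"
    using profile_eq_0_iff by force
  ultimately have "card (range ?P) = card (?P ` (UNIV - {0})) + 1"
    by simp
  also have "card (?P ` (UNIV - {0})) = card ((\<lambda>g. walsh m f (- g)) ` (UNIV - {0}))"
    by (rule card_image_eq_if_same_fibres)
       (auto simp: profile_eq_iff_char_sums_eq walsh_eq_iff_char_sums_eq)
  also have "(\<lambda>g. walsh m f (- g)) ` (UNIV - {0}) = walsh m f ` (uminus ` (UNIV - {0}))"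
    by (simp add: image_image)
  also have "uminus ` (UNIV - {0 :: 'a}) = UNIV - {0}"
  proof
    show "UNIV - {0} \<subseteq> uminus ` (UNIV - {0 :: 'a})"
    proof
      fix y :: 'a assume "y \<in> UNIV - {0}"
      then show "y \<in> uminus ` (UNIV - {0})"
        by (intro image_eqI[of y uminus "- y"]) auto
    qed
  qed auto
  finally show ?thesis .
qed

end

theorem corollary4p5:
  fixes f :: "'a::{finite,field} \<Rightarrow> 'a" and p m :: nat
  assumes "prime p" and "CHAR('a) = p" and "CARD('a) = p ^ m"
    and "\<forall>x. f x \<in> prime_subfield"
    and "f 0 = 0"
    and "\<forall>k x. 0 < k \<and> k < p \<longrightarrow> f (of_nat k * x) = f x"
  shows "sym_assoc_scheme (UNIV :: 'a set) (insert None (Some ` (f ` (UNIV - {0})))) (rel_of f)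
         \<longleftrightarrow> card (f ` (UNIV - {0})) = card (walsh m f ` (UNIV - {0}))"
proof -
  interpret walsh_setting p m f
    using assms by unfold_locales
  have indices: "insert None (Some ` (f ` (UNIV - {0}))) = rel_indices"
    by (simp add: rel_indices_def)
  have "sym_assoc_scheme UNIV rel_indices (rel_of f)
      \<longleftrightarrow> (\<forall>u\<in>char_sums. \<forall>v\<in>char_sums. u * v \<in> cfun.span char_sums)"
    by (rule sym_assoc_scheme_iff_span_mult_closed)
  also have "\<dots> \<longleftrightarrow> card (range (profile char_sums)) = card char_sums"
    by (rule span_mult_closed_iff_card_profiles)
       (simp_all add: independent_char_sums one_in_span_char_sums)
  also have "card char_sums = card (f ` (UNIV - {0})) + 1"
    by (simp add: card_image[OF inj_on_char_sum] card_rel_indices)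
  finally show ?thesis
    unfolding indices card_profiles_char_sums by (simp add: eq_commute)
qed

end
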